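(* Let $R$ be a finite local Frobenius ring with a fixed primitive additive character $\psi$. Let $\tau$ be any multiplicative character of $R$ and let $\chi$ be a primitive multiplicative character of $R$. Then $$\sum_{a\in R^\times}\chi(a)\,|K_\tau(a)|^2=\tau(-1)\,J(\chi\tau,\chi\overline{\tau})\,G(\chi)^2.$$
   Context: All rings are finite and commutative with identity; $R^\times$ is the unit group; $M$ is the maximal ideal. An additive character $(R,+)\to\mathbb{C}^*$ is primitive if the only ideal on which it is identically $1$ is $(0)$; $R$ is Frobenius if such a character exists. A multiplicative character is a homomorphism $R^\times\to\mathbb{C}^*$; its conductor is $R$ if it is trivial, and otherwise the largest ideal $I\subseteq M$ such that it is identically $1$ on $1+I$; it is primitive if its conductor is $(0)$. $K_\tau(a)=\sum_{u\in R^\times}\tau(u)\psi(u+au^{-1})$; Gauss sum $G(\chi)=\sum_{u\in R^\times}\psi(u)\chi(u)$; Jacobi sum $J(\chi,\eta)=\sum_{u,v\in R^\times,\,u+v=1}\chi(u)\eta(v)$; $\overline{\tau}$ is the complex conjugate (inverse) character. *)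

theory Defs
  imports Complex_Main
begin

definition ring_ideal :: "'a::comm_ring_1 set \<Rightarrow> bool" where
  "ring_ideal I \<longleftrightarrow> 0 \<in> I \<and> (\<forall>x\<in>I. \<forall>y\<in>I. x + y \<in> I) \<and> (\<forall>r. \<forall>x\<in>I. r * x \<in> I)"

definition maximal_ideal :: "'a::comm_ring_1 set \<Rightarrow> bool" where
  "maximal_ideal M \<longleftrightarrow> ring_ideal M \<and> M \<noteq> UNIV \<and>
     (\<forall>J. ring_ideal J \<and> M \<subseteq> J \<and> J \<noteq> UNIV \<longrightarrow> J = M)"

definition local_ring :: "'a::comm_ring_1 itself \<Rightarrow> bool" where
  "local_ring _ \<longleftrightarrow> (\<exists>!M::'a set. maximal_ideal M)"

definition the_max_ideal :: "'a::comm_ring_1 set" where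
  "the_max_ideal = (THE M. maximal_ideal M)"

definition ring_units :: "'a::comm_ring_1 set" where
  "ring_units = {u. u dvd 1}"

definition ring_inv :: "'a::comm_ring_1 \<Rightarrow> 'a" where
  "ring_inv u = (THE v. u * v = 1)"

definition add_char :: "('a::comm_ring_1 \<Rightarrow> complex) \<Rightarrow> bool" where
  "add_char \<psi> \<longleftrightarrow> (\<forall>x. \<psi> x \<noteq> 0) \<and> (\<forall>x y. \<psi> (x + y) = \<psi> x * \<psi> y)"

definition primitive_add_char :: "('a::comm_ring_1 \<Rightarrow> complex) \<Rightarrow> bool" where
  "primitive_add_char \<psi> \<longleftrightarrow> add_char \<psi> \<and>
     (\<forall>I. ring_ideal I \<and> (\<forall>x\<in>I. \<psi> x = 1) \<longrightarrow> I = {0})"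

definition frobenius_ring :: "'a::comm_ring_1 itself \<Rightarrow> bool" where
  "frobenius_ring _ \<longleftrightarrow> (\<exists>\<psi>::'a \<Rightarrow> complex. primitive_add_char \<psi>)"

text \<open>Multiplicative characters R^x to C^*; only values on units matter.\<close>

definition mult_char :: "('a::comm_ring_1 \<Rightarrow> complex) \<Rightarrow> bool" where
  "mult_char \<chi> \<longleftrightarrow> (\<forall>u\<in>ring_units. \<chi> u \<noteq> 0) \<and>
     (\<forall>u\<in>ring_units. \<forall>v\<in>ring_units. \<chi> (u * v) = \<chi> u * \<chi> v)"

definition trivial_mult_char :: "('a::comm_ring_1 \<Rightarrow> complex) \<Rightarrow> bool" where
  "trivial_mult_char \<chi> \<longleftrightarrow> (\<forall>u\<in>ring_units. \<chi> u = 1)"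

text \<open>Conductor (0): nontrivial, and every ideal I inside M with chi = 1 on 1+I is (0)
  (equivalently the largest such ideal is (0)).\<close>

definition primitive_mult_char :: "('a::comm_ring_1 \<Rightarrow> complex) \<Rightarrow> bool" where
  "primitive_mult_char \<chi> \<longleftrightarrow> mult_char \<chi> \<and> \<not> trivial_mult_char \<chi> \<and>
     (\<forall>I. ring_ideal I \<and> I \<subseteq> the_max_ideal \<and> (\<forall>x\<in>I. \<chi> (1 + x) = 1) \<longrightarrow> I = {0})"

definition kloosterman :: "('a::comm_ring_1 \<Rightarrow> complex) \<Rightarrow> ('a \<Rightarrow> complex) \<Rightarrow> 'a \<Rightarrow> complex" where
  "kloosterman \<psi> \<tau> a = (\<Sum>u\<in>ring_units. \<tau> u * \<psi> (u + a * ring_inv u))"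

definition gauss_sum :: "('a::comm_ring_1 \<Rightarrow> complex) \<Rightarrow> ('a \<Rightarrow> complex) \<Rightarrow> complex" where
  "gauss_sum \<psi> \<chi> = (\<Sum>u\<in>ring_units. \<psi> u * \<chi> u)"

definition jacobi_sum :: "('a::comm_ring_1 \<Rightarrow> complex) \<Rightarrow> ('a \<Rightarrow> complex) \<Rightarrow> complex" where
  "jacobi_sum \<chi> \<eta> = (\<Sum>(u, v)\<in>{(u, v). u \<in> ring_units \<and> v \<in> ring_units \<and> u + v = 1}. \<chi> u * \<eta> v)"

end

theory Submission
  imports Defs
begin

text \<open>Expanding \<open>|K\<^sub>\<tau>(a)|\<^sup>2\<close> as a double sum over units \<open>u, v\<close> and summing against \<open>\<chi>\<close>
  first, the sum over \<open>a\<close> is the twisted Gauss sum \<open>\<Sum>\<^sub>a \<chi>(a) \<psi>(a b)\<close> with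
  \<open>b = u\<inverse> - v\<inverse>\<close>. It equals \<open>\<chi>(b\<inverse>) G(\<chi>)\<close> for a unit \<open>b\<close> and vanishes otherwise, because
  a primitive \<open>\<chi>\<close> is nontrivial on \<open>1 + ann(b)\<close>, an ideal inside the maximal ideal.
  The surviving pairs \<open>(u, v)\<close> are exactly \<open>(w x, -w y)\<close> with units \<open>w, x, y\<close> and
  \<open>x + y = 1\<close>, and in these coordinates \<open>b\<inverse> = w x y\<close>, so the double sum splits as
  \<open>\<tau>(-1) G(\<chi>) J(\<chi>\<tau>, \<chi>\<tau>\<inverse>)\<close>.\<close>

section \<open>Units and inverses\<close>

lemma ring_units_mult [intro]: "u \<in> ring_units \<Longrightarrow> v \<in> ring_units \<Longrightarrow> u * v \<in> ring_units"
  unfolding ring_units_def using mult_dvd_mono[of u 1 v 1] by simp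

lemma ring_units_one [simp]: "1 \<in> ring_units"
  by (simp add: ring_units_def)

lemma ring_units_minus_iff [simp]: "- u \<in> ring_units \<longleftrightarrow> u \<in> ring_units"
  by (simp add: ring_units_def)

lemma ring_unitsI: "u * v = 1 \<Longrightarrow> u \<in> ring_units"
  unfolding ring_units_def by (auto intro: dvdI[of 1 u v])

lemma ring_inv_eqI:
  fixes u v :: "'a::comm_ring_1"
  assumes "u * v = 1"
  shows "ring_inv u = v"
  unfolding ring_inv_def
proof (rule the_equality)
  fix w assume "u * w = 1"
  then have "w = w * (u * v)"
    using assms by simp
  also have "\<dots> = (u * w) * v"
    by (simp add: ac_simps)
  also have "\<dots> = v"
    using \<open>u * w = 1\<close> by simp
  finally show "w = v" .
qed (fact assms)

lemma ring_inv_right: "u \<in> ring_units \<Longrightarrow> u * ring_inv u = 1"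
  unfolding ring_units_def by (auto elim!: dvdE simp: ring_inv_eqI)

lemma ring_inv_left: "u \<in> ring_units \<Longrightarrow> ring_inv u * u = 1"
  by (simp add: ring_inv_right mult.commute)

lemma ring_units_ring_inv: "u \<in> ring_units \<Longrightarrow> ring_inv u \<in> ring_units"
  by (rule ring_unitsI[of _ u]) (simp add: ring_inv_left)

lemma ring_inv_mult:
  "u \<in> ring_units \<Longrightarrow> v \<in> ring_units \<Longrightarrow> ring_inv (u * v) = ring_inv u * ring_inv v"
proof (rule ring_inv_eqI)
  assume "u \<in> ring_units" "v \<in> ring_units"
  then have "(u * ring_inv u) * (v * ring_inv v) = 1"
    by (simp add: ring_inv_right)
  then show "u * v * (ring_inv u * ring_inv v) = 1"
    by (simp add: ac_simps)
qed

lemma ring_inv_inv: "u \<in> ring_units \<Longrightarrow> ring_inv (ring_inv u) = u"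
  by (rule ring_inv_eqI) (rule ring_inv_left)

lemma ring_inv_minus: "u \<in> ring_units \<Longrightarrow> ring_inv (- u) = - ring_inv u"
  by (rule ring_inv_eqI) (simp add: ring_inv_right)

lemma ring_inv_minus_one: "ring_inv (- 1 :: 'a::comm_ring_1) = - 1"
  by (rule ring_inv_eqI) simp

lemma bij_betw_mult_unit:
  fixes w :: "'a::comm_ring_1"
  assumes "w \<in> ring_units"
  shows "bij_betw ((*) w) ring_units ring_units"
  by (rule bij_betw_byWitness[where f' = "(*) (ring_inv w)"])
     (use assms in \<open>auto simp: mult.assoc[symmetric] ring_inv_left ring_inv_right
       ring_units_ring_inv\<close>)

lemma sum_units_eq_0_if_scaled:
  fixes f :: "'a::{comm_ring_1, finite} \<Rightarrow> 'b::idom"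
  assumes "w \<in> ring_units" and "c \<noteq> 1" and "\<And>a. a \<in> ring_units \<Longrightarrow> f (w * a) = c * f a"
  shows "sum f ring_units = 0"
proof -
  have "sum f ring_units = (\<Sum>a\<in>ring_units. f (w * a))"
    using sum.reindex_bij_betw[OF bij_betw_mult_unit[OF assms(1)], of f] by simp
  also have "\<dots> = c * sum f ring_units"
    using assms(3) by (simp add: sum_distrib_left)
  finally have "(1 - c) * sum f ring_units = 0"
    by (simp add: algebra_simps)
  then show ?thesis
    using assms(2) by simp
qed

section \<open>Characters\<close>

lemma mult_char_mult:
  "mult_char \<tau> \<Longrightarrow> u \<in> ring_units \<Longrightarrow> v \<in> ring_units \<Longrightarrow> \<tau> (u * v) = \<tau> u * \<tau> v"
  by (simp add: mult_char_def)

lemma mult_char_one: "mult_char \<tau> \<Longrightarrow> \<tau> 1 = 1"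
proof -
  assume "mult_char \<tau>"
  then have "\<tau> 1 * \<tau> 1 = \<tau> 1 * 1" and "\<tau> 1 \<noteq> 0"
    using mult_char_mult[of \<tau> 1 1] by (auto simp: mult_char_def)
  then show "\<tau> 1 = 1"
    by simp
qed

lemma norm_mult_char:
  fixes \<tau> :: "'a::{comm_ring_1, finite} \<Rightarrow> complex"
  assumes "mult_char \<tau>" and "w \<in> ring_units"
  shows "norm (\<tau> w) = 1"
proof -
  let ?n = "card (ring_units :: 'a set)"
  have "prod \<tau> ring_units = (\<Prod>a\<in>ring_units. \<tau> (w * a))"
    using prod.reindex_bij_betw[OF bij_betw_mult_unit[OF assms(2)], of \<tau>] by simp
  also have "\<dots> = \<tau> w ^ ?n * prod \<tau> ring_units"
    using assms by (simp add: mult_char_mult prod.distrib)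
  finally have "\<tau> w ^ ?n = 1"
    using assms(1) by (simp add: mult_char_def)
  moreover have "?n > 0"
    using assms(2) by (auto simp: card_gt_0_iff)
  ultimately show ?thesis
    using power_eq_imp_eq_base[of "norm (\<tau> w)" ?n 1] by (simp flip: norm_power)
qed

lemma norm_add_char:
  fixes \<psi> :: "'a::{comm_ring_1, finite} \<Rightarrow> complex"
  assumes "add_char \<psi>"
  shows "norm (\<psi> w) = 1"
proof -
  let ?n = "card (UNIV :: 'a set)"
  have "prod \<psi> UNIV = (\<Prod>a\<in>UNIV. \<psi> (w + a))"
    by (rule prod.reindex_bij_witness[where i = "\<lambda>a. w + a" and j = "\<lambda>a. a - w"]) auto
  also have "\<dots> = \<psi> w ^ ?n * prod \<psi> UNIV"
    using assms by (simp add: add_char_def prod.distrib)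
  finally have "\<psi> w ^ ?n = 1"
    using assms by (simp add: add_char_def)
  moreover have "?n > 0"
    by (simp add: card_gt_0_iff)
  ultimately show ?thesis
    using power_eq_imp_eq_base[of "norm (\<psi> w)" ?n 1] by (simp flip: norm_power)
qed

lemma cnj_eq_if_norm_1_mult_eq_1:
  fixes z w :: complex
  assumes "norm z = 1" and "z * w = 1"
  shows "cnj z = w"
proof -
  have "z * cnj z = 1"
    using complex_norm_square[of z] assms(1) by simp
  then have "cnj z = cnj z * (z * w)"
    using assms(2) by simp
  also have "\<dots> = w"
    using \<open>z * cnj z = 1\<close> by (simp add: ac_simps)
  finally show ?thesis .
qed

lemma cnj_mult_char:
  fixes \<tau> :: "'a::{comm_ring_1, finite} \<Rightarrow> complex"
  assumes "mult_char \<tau>" and "w \<in> ring_units"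
  shows "cnj (\<tau> w) = \<tau> (ring_inv w)"
proof -
  have "\<tau> w * \<tau> (ring_inv w) = 1"
    using assms by (simp add: mult_char_mult[symmetric] ring_units_ring_inv ring_inv_right
        mult_char_one)
  then show ?thesis
    by (rule cnj_eq_if_norm_1_mult_eq_1[OF norm_mult_char[OF assms]])
qed

lemma add_char_add: "add_char \<psi> \<Longrightarrow> \<psi> (x + y) = \<psi> x * \<psi> y"
  by (simp add: add_char_def)

lemma add_char_zero: "add_char \<psi> \<Longrightarrow> \<psi> 0 = 1"
proof -
  assume "add_char \<psi>"
  then have "\<psi> (0 + 0) = \<psi> 0 * \<psi> 0" and "\<psi> 0 \<noteq> 0"
    unfolding add_char_def by blast+
  then show "\<psi> 0 = 1"
    by simp
qed

lemma cnj_add_char: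
  fixes \<psi> :: "'a::{comm_ring_1, finite} \<Rightarrow> complex"
  assumes "add_char \<psi>"
  shows "cnj (\<psi> w) = \<psi> (- w)"
proof -
  have "\<psi> (w + - w) = \<psi> w * \<psi> (- w)"
    using assms unfolding add_char_def by blast
  then have "\<psi> w * \<psi> (- w) = 1"
    using add_char_zero[OF assms] by simp
  then show ?thesis
    by (rule cnj_eq_if_norm_1_mult_eq_1[OF norm_add_char[OF assms]])
qed

section \<open>Local rings\<close>

lemma ring_ideal_eq_UNIV_iff:
  assumes "ring_ideal I"
  shows "I = UNIV \<longleftrightarrow> 1 \<in> I"
proof
  assume "1 \<in> I"
  then have "r * 1 \<in> I" for r
    using assms by (simp only: ring_ideal_def)
  then show "I = UNIV"
    by auto
qed simp

lemma ring_ideal_principal: "ring_ideal (range ((*) c))"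
  unfolding ring_ideal_def
proof (intro conjI ballI allI)
  show "0 \<in> range ((*) c)"
    by (rule range_eqI[of _ _ 0]) simp
next
  fix x y assume "x \<in> range ((*) c)" "y \<in> range ((*) c)"
  then show "x + y \<in> range ((*) c)"
    by (auto simp flip: distrib_left)
next
  fix r x assume "x \<in> range ((*) c)"
  then show "r * x \<in> range ((*) c)"
    by (auto simp: mult.left_commute)
qed

lemma ex_maximal_ideal_superset:
  fixes J :: "'a::{comm_ring_1, finite} set"
  shows "ring_ideal J \<Longrightarrow> J \<noteq> UNIV \<Longrightarrow> \<exists>M. maximal_ideal M \<and> J \<subseteq> M"
proof (induction "card (UNIV - J)" arbitrary: J rule: less_induct)
  case less
  show ?case
  proof (cases "maximal_ideal J")
    case False
    then obtain K where K: "ring_ideal K" "J \<subseteq> K" "K \<noteq> UNIV" "K \<noteq> J"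
      using less.prems unfolding maximal_ideal_def by blast
    then have "card (UNIV - K) < card (UNIV - J)"
      by (intro psubset_card_mono) auto
    then obtain M where "maximal_ideal M" "K \<subseteq> M"
      using less.hyps K by blast
    with K show ?thesis
      by blast
  qed blast
qed

lemma maximal_ideal_the_max_ideal:
  assumes "local_ring TYPE('a::comm_ring_1)"
  shows "maximal_ideal (the_max_ideal :: 'a set)"
  using assms unfolding local_ring_def the_max_ideal_def by (rule theI')

lemma ideal_subset_the_max_ideal:
  fixes J :: "'a::{comm_ring_1, finite} set"
  assumes "local_ring TYPE('a)" and "ring_ideal J" and "J \<noteq> UNIV"
  shows "J \<subseteq> the_max_ideal"
proof -
  obtain M where "maximal_ideal M" "J \<subseteq> M"
    using ex_maximal_ideal_superset[OF assms(2,3)] by blast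
  moreover have "M = the_max_ideal"
    using assms(1) \<open>maximal_ideal M\<close> maximal_ideal_the_max_ideal[OF assms(1)]
    unfolding local_ring_def by blast
  ultimately show ?thesis
    by simp
qed

lemma one_plus_the_max_ideal_unit:
  fixes x :: "'a::{comm_ring_1, finite}"
  assumes L: "local_ring TYPE('a)" and x: "x \<in> the_max_ideal"
  shows "1 + x \<in> ring_units"
proof (rule ccontr)
  assume "1 + x \<notin> ring_units"
  then have "1 \<notin> range ((*) (1 + x))"
    by (auto intro: ring_unitsI)
  then have "range ((*) (1 + x)) \<subseteq> the_max_ideal"
    using ideal_subset_the_max_ideal[OF L ring_ideal_principal] by blast
  then have "(1 + x) * 1 \<in> the_max_ideal"
    by blast
  moreover have M: "ring_ideal (the_max_ideal :: 'a set)" "the_max_ideal \<noteq> (UNIV :: 'a set)"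
    using maximal_ideal_the_max_ideal[OF L] unfolding maximal_ideal_def by blast+
  ultimately have "(1 + x) + (- 1) * x \<in> the_max_ideal"
    using x unfolding ring_ideal_def by (simp only: mult_1_right)
  then show False
    using M ring_ideal_eq_UNIV_iff by auto
qed

lemma ex_annihilator_of_nonunit:
  fixes b :: "'a::{comm_ring_1, finite}"
  assumes "b \<notin> ring_units"
  shows "\<exists>x. x \<noteq> 0 \<and> x * b = 0"
proof -
  have "\<not> surj (\<lambda>x. x * b)"
  proof
    assume "surj (\<lambda>x. x * b)"
    then have "1 \<in> range (\<lambda>x. x * b)"
      by simp
    then obtain c where "1 = c * b"
      by blast
    then have "b * c = 1"
      by (simp add: mult.commute)
    then show False
      using assms by (blast intro: ring_unitsI)
  qed
  then have "\<not> inj (\<lambda>x. x * b)"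
    using finite_UNIV_inj_surj[OF finite_UNIV, of "\<lambda>x. x * b"] by (rule contrapos_nn)
  then obtain c d where "c \<noteq> d" "c * b = d * b"
    unfolding inj_def by blast
  then show ?thesis
    by (intro exI[of _ "c - d"]) (simp add: algebra_simps)
qed

section \<open>Twisted Gauss sums\<close>

lemma primitive_mult_char_ex_unit_fixing:
  fixes \<chi> :: "'a::{comm_ring_1, finite} \<Rightarrow> complex"
  assumes L: "local_ring TYPE('a)" and \<chi>: "primitive_mult_char \<chi>" and b: "b \<notin> ring_units"
  shows "\<exists>w\<in>ring_units. \<chi> w \<noteq> 1 \<and> w * b = b"
proof (cases "b = 0")
  case True
  then show ?thesis
    using \<chi> unfolding primitive_mult_char_def trivial_mult_char_def by auto
next
  case False
  let ?I = "{x. x * b = 0}"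
  have I: "ring_ideal ?I"
    unfolding ring_ideal_def by (auto simp: algebra_simps)
  moreover have "1 \<notin> ?I"
    using False by simp
  then have "?I \<noteq> UNIV"
    by blast
  ultimately have IM: "?I \<subseteq> the_max_ideal"
    by (rule ideal_subset_the_max_ideal[OF L])
  have "?I \<noteq> {0}"
    using ex_annihilator_of_nonunit[OF b] by auto
  then obtain x where x: "x * b = 0" "\<chi> (1 + x) \<noteq> 1"
    using \<chi> I IM unfolding primitive_mult_char_def by blast
  then have "1 + x \<in> ring_units"
    using IM by (intro one_plus_the_max_ideal_unit[OF L]) blast
  with x show ?thesis
    by (intro bexI[of _ "1 + x"]) (auto simp: algebra_simps)
qed

lemma twisted_gauss_sum_nonunit:
  fixes \<chi> \<psi> :: "'a::{comm_ring_1, finite} \<Rightarrow> complex"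
  assumes "local_ring TYPE('a)" and \<chi>: "primitive_mult_char \<chi>" and "b \<notin> ring_units"
  shows "(\<Sum>a\<in>ring_units. \<chi> a * \<psi> (a * b)) = 0"
proof -
  obtain w where w: "w \<in> ring_units" "\<chi> w \<noteq> 1" "w * b = b"
    using primitive_mult_char_ex_unit_fixing[OF assms] by blast
  show ?thesis
  proof (rule sum_units_eq_0_if_scaled[OF w(1,2)])
    fix a :: 'a assume "a \<in> ring_units"
    moreover have "w * a * b = a * b"
      using w(3) by (simp add: ac_simps)
    ultimately show "\<chi> (w * a) * \<psi> (w * a * b) = \<chi> w * (\<chi> a * \<psi> (a * b))"
      using \<chi> w(1) by (simp add: primitive_mult_char_def mult_char_mult)
  qed
qed

lemma twisted_gauss_sum_unit:
  fixes \<chi> \<psi> :: "'a::{comm_ring_1, finite} \<Rightarrow> complex"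
  assumes \<chi>: "mult_char \<chi>" and b: "b \<in> ring_units"
  shows "(\<Sum>a\<in>ring_units. \<chi> a * \<psi> (a * b)) = \<chi> (ring_inv b) * gauss_sum \<psi> \<chi>"
proof -
  have b': "ring_inv b \<in> ring_units"
    using b by (rule ring_units_ring_inv)
  have "(\<Sum>a\<in>ring_units. \<chi> a * \<psi> (a * b))
      = (\<Sum>a\<in>ring_units. \<chi> (ring_inv b * a) * \<psi> (ring_inv b * a * b))"
    using sum.reindex_bij_betw[OF bij_betw_mult_unit[OF b'], of "\<lambda>a. \<chi> a * \<psi> (a * b)"]
    by simp
  also have "\<dots> = (\<Sum>a\<in>ring_units. \<chi> (ring_inv b) * (\<psi> a * \<chi> a))"
  proof (rule sum.cong[OF refl])
    fix a :: 'a assume "a \<in> ring_units"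
    moreover have "ring_inv b * a * b = a"
      using ring_inv_left[OF b] by (simp add: ac_simps)
    ultimately show "\<chi> (ring_inv b * a) * \<psi> (ring_inv b * a * b) = \<chi> (ring_inv b) * (\<psi> a * \<chi> a)"
      using \<chi> b' by (simp add: mult_char_mult)
  qed
  finally show ?thesis
    by (simp add: gauss_sum_def sum_distrib_left)
qed

section \<open>The twisted second moment of Kloosterman sums\<close>

lemma norm_kloosterman_sq:
  fixes \<psi> \<tau> :: "'a::{comm_ring_1, finite} \<Rightarrow> complex"
  assumes \<psi>: "add_char \<psi>"
  shows "complex_of_real ((cmod (kloosterman \<psi> \<tau> a))\<^sup>2) =
     (\<Sum>u\<in>ring_units. \<Sum>v\<in>ring_units.
        \<tau> u * cnj (\<tau> v) * \<psi> (u - v) * \<psi> (a * (ring_inv u - ring_inv v)))"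
proof -
  have \<psi>_diff: "\<psi> (u + a * ring_inv u) * cnj (\<psi> (v + a * ring_inv v))
      = \<psi> (u - v) * \<psi> (a * (ring_inv u - ring_inv v))" for u v
  proof -
    have "\<psi> (u + a * ring_inv u) * cnj (\<psi> (v + a * ring_inv v))
        = \<psi> (u + a * ring_inv u + - (v + a * ring_inv v))"
      by (simp only: cnj_add_char[OF \<psi>] add_char_add[OF \<psi>, of "u + a * ring_inv u"])
    also have "u + a * ring_inv u + - (v + a * ring_inv v) = (u - v) + a * (ring_inv u - ring_inv v)"
      by (simp add: algebra_simps)
    finally show ?thesis
      by (simp only: add_char_add[OF \<psi>, of "u - v"])
  qed
  have "complex_of_real ((cmod (kloosterman \<psi> \<tau> a))\<^sup>2) = kloosterman \<psi> \<tau> a * cnj (kloosterman \<psi> \<tau> a)"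
    by (rule complex_norm_square)
  also have "\<dots> = (\<Sum>u\<in>ring_units. \<Sum>v\<in>ring_units.
      \<tau> u * cnj (\<tau> v) * (\<psi> (u + a * ring_inv u) * cnj (\<psi> (v + a * ring_inv v))))"
    unfolding kloosterman_def by (simp add: sum_product ac_simps)
  finally show ?thesis
    by (simp only: \<psi>_diff mult.assoc)
qed

lemma sum_mult_char_norm_kloosterman_sq:
  fixes \<psi> \<tau> \<chi> :: "'a::{comm_ring_1, finite} \<Rightarrow> complex"
  assumes L: "local_ring TYPE('a)" and \<psi>: "add_char \<psi>" and \<chi>: "primitive_mult_char \<chi>"
  shows "(\<Sum>a\<in>ring_units. \<chi> a * complex_of_real ((cmod (kloosterman \<psi> \<tau> a))\<^sup>2)) =
    gauss_sum \<psi> \<chi> *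
      (\<Sum>(u, v)\<in>{(u, v). u \<in> ring_units \<and> v \<in> ring_units \<and> ring_inv u - ring_inv v \<in> ring_units}.
         \<tau> u * cnj (\<tau> v) * \<psi> (u - v) * \<chi> (ring_inv (ring_inv u - ring_inv v)))"
proof -
  let ?U = "ring_units :: 'a set"
  define F where "F u v = \<tau> u * cnj (\<tau> v) * \<psi> (u - v)" for u v
  define d where "d u v = ring_inv u - ring_inv v" for u v :: 'a
  have "(\<Sum>a\<in>?U. \<chi> a * complex_of_real ((cmod (kloosterman \<psi> \<tau> a))\<^sup>2))
      = (\<Sum>a\<in>?U. \<Sum>u\<in>?U. \<Sum>v\<in>?U. F u v * (\<chi> a * \<psi> (a * d u v)))"
    by (simp only: norm_kloosterman_sq[OF \<psi>]) (simp add: F_def d_def sum_distrib_left ac_simps)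
  also have "\<dots> = (\<Sum>u\<in>?U. \<Sum>v\<in>?U. \<Sum>a\<in>?U. F u v * (\<chi> a * \<psi> (a * d u v)))"
    by (subst sum.swap) (rule sum.cong[OF refl], rule sum.swap)
  also have "\<dots> = (\<Sum>u\<in>?U. \<Sum>v\<in>?U.
      if d u v \<in> ?U then gauss_sum \<psi> \<chi> * (F u v * \<chi> (ring_inv (d u v))) else 0)"
    using \<chi> by (intro sum.cong refl)
      (simp add: twisted_gauss_sum_unit twisted_gauss_sum_nonunit[OF L \<chi>] primitive_mult_char_def
        flip: sum_distrib_left)
  also have "\<dots> = (\<Sum>(u, v)\<in>?U \<times> ?U.
      if d u v \<in> ?U then gauss_sum \<psi> \<chi> * (F u v * \<chi> (ring_inv (d u v))) else 0)"
    by (rule sum.cartesian_product)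
  also have "\<dots> = (\<Sum>(u, v)\<in>{(u, v). u \<in> ?U \<and> v \<in> ?U \<and> d u v \<in> ?U}.
      if d u v \<in> ?U then gauss_sum \<psi> \<chi> * (F u v * \<chi> (ring_inv (d u v))) else 0)"
    by (rule sum.mono_neutral_right) (auto split: if_splits)
  also have "\<dots> = gauss_sum \<psi> \<chi> *
      (\<Sum>(u, v)\<in>{(u, v). u \<in> ?U \<and> v \<in> ?U \<and> d u v \<in> ?U}. F u v * \<chi> (ring_inv (d u v)))"
    by (auto simp: sum_distrib_left intro!: sum.cong)
  finally show ?thesis
    by (simp add: F_def d_def)
qed

lemma ring_inv_diff_scaled_pair:
  fixes w x y :: "'a::comm_ring_1"
  assumes w: "w \<in> ring_units" and x: "x \<in> ring_units" and y: "y \<in> ring_units"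
    and xy: "x + y = 1"
  shows "ring_inv (w * x) - ring_inv (- (w * y)) = ring_inv (w * x * y)"
proof -
  have "ring_inv (w * x) - ring_inv (- (w * y)) = ring_inv w * ring_inv x + ring_inv w * ring_inv y"
    using w x y by (simp add: ring_inv_mult ring_inv_minus ring_units_mult)
  also have "\<dots> = ring_inv w * ring_inv x * (ring_inv y * y) + ring_inv w * ring_inv y * (ring_inv x * x)"
    using ring_inv_left[OF x] ring_inv_left[OF y] by simp
  also have "\<dots> = ring_inv w * ring_inv x * ring_inv y * (y + x)"
    by (simp add: algebra_simps)
  also have "\<dots> = ring_inv (w * x * y)"
    using w x y xy by (simp add: ring_inv_mult ring_units_mult add.commute)
  finally show ?thesis .
qed

lemma ring_units_diff_if_ring_inv_diff:
  fixes u v :: "'a::comm_ring_1"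
  assumes u: "u \<in> ring_units" and v: "v \<in> ring_units"
    and d: "ring_inv u - ring_inv v \<in> ring_units"
  shows "u - v \<in> ring_units"
proof -
  have "- (u * v) * (ring_inv u - ring_inv v) = - ((u * ring_inv u) * v) + (v * ring_inv v) * u"
    by (simp add: algebra_simps)
  also have "\<dots> = u - v"
    using ring_inv_right[OF u] ring_inv_right[OF v] by simp
  finally show ?thesis
    using u v d by (metis ring_units_mult ring_units_minus_iff)
qed

lemma bij_betw_scale_unit_pairs:
  "bij_betw (\<lambda>(w, x, y). (w * x, - (w * y)))
     (ring_units \<times> {(x, y). x \<in> ring_units \<and> y \<in> ring_units \<and> x + y = (1::'a::comm_ring_1)})
     {(u, v). u \<in> ring_units \<and> v \<in> ring_units \<and> ring_inv u - ring_inv v \<in> ring_units}"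
  (is "bij_betw ?f ?A ?B")
proof -
  define g :: "'a \<times> 'a \<Rightarrow> 'a \<times> 'a \<times> 'a"
    where "g = (\<lambda>(u, v). (u - v, u * ring_inv (u - v), - (v * ring_inv (u - v))))"
  have gf: "g (?f (w, x, y)) = (w, x, y) \<and> ?f (w, x, y) \<in> ?B"
    if w: "w \<in> ring_units" and x: "x \<in> ring_units" and y: "y \<in> ring_units" and xy: "x + y = 1"
    for w x y
  proof -
    have wxy: "w * x - - (w * y) = w"
      using xy by (simp flip: distrib_left)
    have cancel: "w * z * ring_inv w = z" for z
    proof -
      have "w * z * ring_inv w = z * (w * ring_inv w)"
        by (simp add: ac_simps)
      then show ?thesis
        using ring_inv_right[OF w] by simp
    qed
    show ?thesis
      using wxy w x y ring_inv_diff_scaled_pair[OF w x y xy]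
      by (simp add: g_def cancel ring_units_mult ring_units_ring_inv)
  qed
  have fg: "?f (g (u, v)) = (u, v) \<and> g (u, v) \<in> ?A"
    if u: "u \<in> ring_units" and v: "v \<in> ring_units" and d: "ring_inv u - ring_inv v \<in> ring_units"
    for u v
  proof -
    have uv: "u - v \<in> ring_units"
      using u v d by (rule ring_units_diff_if_ring_inv_diff)
    have r: "(u - v) * ring_inv (u - v) = 1"
      using uv by (rule ring_inv_right)
    have "(u - v) * (z * ring_inv (u - v)) = z" for z
      using r by (simp only: mult.left_commute[of "u - v" z] mult_1_right)
    moreover have "u * ring_inv (u - v) + - (v * ring_inv (u - v)) = 1"
      using r by (simp add: algebra_simps)
    ultimately show ?thesis
      using u v uv by (simp add: g_def ring_units_mult ring_units_ring_inv)
  qed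
  show ?thesis
  proof (rule bij_betw_byWitness[where f' = g])
    show "\<forall>p\<in>?A. g (?f p) = p" "?f ` ?A \<subseteq> ?B"
      using gf by auto
    show "\<forall>q\<in>?B. ?f (g q) = q" "g ` ?B \<subseteq> ?A"
      using fg by blast+
  qed
qed

lemma sum_Times_mult:
  fixes f g :: "_ \<Rightarrow> 'b::semiring_0"
  shows "(\<Sum>(a, b)\<in>A \<times> B. f a * g b) = sum f A * sum g B"
  by (simp only: sum_product sum.cartesian_product)

lemma kloosterman_summand_scale_unit_pair:
  fixes \<psi> \<tau> \<chi> :: "'a::{comm_ring_1, finite} \<Rightarrow> complex"
  assumes \<tau>: "mult_char \<tau>" and \<chi>: "mult_char \<chi>"
    and w: "w \<in> ring_units" and x: "x \<in> ring_units" and y: "y \<in> ring_units" and xy: "x + y = 1"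
  shows "\<tau> (w * x) * cnj (\<tau> (- (w * y))) * \<psi> (w * x - - (w * y))
           * \<chi> (ring_inv (ring_inv (w * x) - ring_inv (- (w * y))))
         = \<tau> (- 1) * (\<psi> w * \<chi> w) * ((\<chi> x * \<tau> x) * (\<chi> y * cnj (\<tau> y)))"
proof -
  have m1: "- 1 \<in> ring_units"
    by simp
  have "w * x - - (w * y) = w"
    using xy by (simp flip: distrib_left)
  moreover have "ring_inv (ring_inv (w * x) - ring_inv (- (w * y))) = w * x * y"
    using w x y by (simp add: ring_inv_diff_scaled_pair[OF w x y xy] ring_inv_inv ring_units_mult)
  moreover have "\<tau> (- (w * y)) = \<tau> (- 1) * \<tau> w * \<tau> y"
    using mult_char_mult[OF \<tau>] m1 w y by (metis mult_minus1 mult.assoc ring_units_mult)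
  moreover have "cnj (\<tau> (- 1)) = \<tau> (- 1)"
    using cnj_mult_char[OF \<tau> m1] by (simp add: ring_inv_minus_one)
  moreover have "\<tau> w * cnj (\<tau> w) = 1"
    using cnj_mult_char[OF \<tau> w] mult_char_mult[OF \<tau> w ring_units_ring_inv[OF w]]
    by (simp add: ring_inv_right[OF w] mult_char_one[OF \<tau>])
  ultimately show ?thesis
    using w x y
    by (simp add: mult_char_mult[OF \<tau>] mult_char_mult[OF \<chi>] ring_units_mult ac_simps)
qed

theorem mainTheorem8:
  fixes \<psi> \<tau> \<chi> :: "'a::{comm_ring_1, finite} \<Rightarrow> complex"
  assumes "local_ring TYPE('a)"
    and "frobenius_ring TYPE('a)"
    and "primitive_add_char \<psi>"
    and "mult_char \<tau>"
    and "primitive_mult_char \<chi>"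
  shows "(\<Sum>a\<in>ring_units. \<chi> a * complex_of_real ((cmod (kloosterman \<psi> \<tau> a))\<^sup>2))
         = \<tau> (-1) * jacobi_sum (\<lambda>u. \<chi> u * \<tau> u) (\<lambda>u. \<chi> u * cnj (\<tau> u))
           * (gauss_sum \<psi> \<chi>)\<^sup>2"
proof -
  let ?G = "gauss_sum \<psi> \<chi>" and ?U = "ring_units :: 'a set"
  let ?Q = "{(x, y). x \<in> ?U \<and> y \<in> ?U \<and> x + y = (1::'a)}"
  have \<psi>: "add_char \<psi>" and \<chi>: "mult_char \<chi>"
    using assms(3,5) by (simp_all add: primitive_add_char_def primitive_mult_char_def)
  have "(\<Sum>a\<in>?U. \<chi> a * complex_of_real ((cmod (kloosterman \<psi> \<tau> a))\<^sup>2))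
      = ?G * (\<Sum>(w, x, y)\<in>?U \<times> ?Q. \<tau> (w * x) * cnj (\<tau> (- (w * y))) * \<psi> (w * x - - (w * y))
           * \<chi> (ring_inv (ring_inv (w * x) - ring_inv (- (w * y)))))"
    unfolding sum_mult_char_norm_kloosterman_sq[OF assms(1) \<psi> assms(5)]
      sum.reindex_bij_betw[OF bij_betw_scale_unit_pairs, symmetric]
    by (simp add: split_def)
  also have "\<dots> = ?G * (\<Sum>(w, q)\<in>?U \<times> ?Q.
      (\<tau> (- 1) * (\<psi> w * \<chi> w)) * (\<lambda>(x, y). (\<chi> x * \<tau> x) * (\<chi> y * cnj (\<tau> y))) q)"
    using kloosterman_summand_scale_unit_pair[OF assms(4) \<chi>] by (auto intro!: sum.cong)
  also have "\<dots> = ?G * (\<tau> (- 1) * ?G * jacobi_sum (\<lambda>u. \<chi> u * \<tau> u) (\<lambda>u. \<chi> u * cnj (\<tau> u)))"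
    unfolding sum_Times_mult gauss_sum_def jacobi_sum_def by (simp only: sum_distrib_left)
  finally show ?thesis
    by (simp add: power2_eq_square ac_simps)
qed

end
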